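(* Let $\mathcal{A}$ be an $[n_1,k_1,d_1]$ linear code over $\mathbb{F}_q$ (the inner code) and $\mathcal{B}$ an $[n_2,k_2,d_2]$ linear code over $\mathbb{F}_{q^{k_1}}$ (the outer code). Let $\mathcal{C}$ be the serially concatenated code of length $n=n_1n_2$ and dimension $k=k_1k_2$ over $\mathbb{F}_q$, obtained by encoding a message with $\mathcal{B}$ and then encoding each of the $n_2$ outer code symbols (viewed as a vector in $\mathbb{F}_q^{k_1}$ via a fixed $\mathbb{F}_q$-linear identification) with $\mathcal{A}$. Then the minimum distance $d$ of $\mathcal{C}$ satisfies $$d\;\le\; n_1n_2-k_1k_2+1-\left(\left\lceil \frac{k_1k_2}{n_1-d_1+1}\right\rceil-1\right)(d_1-1).$$ *)

theory Defs
  imports Complex_Main "HOL-Library.Function_Algebras"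
begin

text \<open>Words of length n over a field are functions nat => 'a vanishing from index n on.
  The vector-space structure is pointwise (addition from Function_Algebras).\<close>

definition svec :: "'a::field \<Rightarrow> (nat \<Rightarrow> 'a) \<Rightarrow> (nat \<Rightarrow> 'a)" where
  "svec c w = (\<lambda>i. c * w i)"

definition words :: "nat \<Rightarrow> (nat \<Rightarrow> 'a::zero) set" where
  "words n = {w. \<forall>i\<ge>n. w i = 0}"

definition hdist :: "(nat \<Rightarrow> 'a) \<Rightarrow> (nat \<Rightarrow> 'a) \<Rightarrow> nat" where
  "hdist x y = card {i. x i \<noteq> y i}"

definition min_dist :: "(nat \<Rightarrow> 'a) set \<Rightarrow> nat" where
  "min_dist C = Min {hdist x y | x y. x \<in> C \<and> y \<in> C \<and> x \<noteq> y}"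

definition linear_code :: "nat \<Rightarrow> nat \<Rightarrow> nat \<Rightarrow> (nat \<Rightarrow> 'a::field) set \<Rightarrow> bool" where
  "linear_code n k d C \<longleftrightarrow>
     C \<subseteq> words n \<and> module.subspace svec C \<and> vector_space.dim svec C = k \<and> min_dist C = d"

definition field_embedding :: "('a::field \<Rightarrow> 'b::field) \<Rightarrow> bool" where
  "field_embedding e \<longleftrightarrow> e 0 = 0 \<and> e 1 = 1 \<and> (\<forall>x y. e (x + y) = e x + e y) \<and> (\<forall>x y. e (x * y) = e x * e y)"

text \<open>Serially concatenated code: outer codeword b (length n2 over 'b), each symbol b j mapped
  to F_q^k1 by phi and encoded by the inner encoder enc; block j occupies positions
  j*n1 .. j*n1+n1-1.\<close>
definition concat_code ::
  "nat \<Rightarrow> nat \<Rightarrow> ((nat \<Rightarrow> 'a::zero) \<Rightarrow> (nat \<Rightarrow> 'a)) \<Rightarrow> ('b \<Rightarrow> (nat \<Rightarrow> 'a)) \<Rightarrow> (nat \<Rightarrow> 'b) set \<Rightarrow> (nat \<Rightarrow> 'a) set" where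
  "concat_code n1 n2 enc phi B =
     (\<lambda>b. (\<lambda>t. if t < n1 * n2 then enc (phi (b (t div n1))) (t mod n1) else 0)) ` B"

end

theory Submission
  imports Defs "HOL-Library.FuncSet"
begin

text \<open>Let s = n1 - d1 + 1. A nonzero inner codeword cannot vanish on its first s coordinates,
  since its weight would be below d1; in particular k1 \<le> s, the Singleton bound. Write
  k1 k2 - 1 = p s + r with r < s, so that p = \<lceil>k1 k2 / s\<rceil> - 1. The outer code has at least
  q^(k1 k2) words, while the first s coordinates of each of the inner blocks 0, ..., p-1 together
  with the first r coordinates of block p are only p s + r < k1 k2 coordinates of the concatenated
  code. Two outer codewords therefore agree there, and their difference gives a nonzero codeword
  whose first p blocks vanish entirely and whose block p starts with r zeros. Its weight is at most
  n1 n2 - p n1 - r, which is the claimed bound.\<close>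

interpretation VS: vector_space "svec :: 'a::field \<Rightarrow> (nat \<Rightarrow> 'a) \<Rightarrow> (nat \<Rightarrow> 'a)"
  by unfold_locales (auto simp: svec_def fun_eq_iff algebra_simps)

lemma two_le_card_field: "2 \<le> card (UNIV :: 'a::{finite,field} set)"
proof -
  have "card {0::'a, 1} = 2" by simp
  then show ?thesis by (metis card_mono finite subset_UNIV)
qed

lemma pigeonhole_agree_on:
  fixes f :: "'x \<Rightarrow> 'i \<Rightarrow> 'a::finite"
  assumes "finite T" "card (UNIV :: 'a set) ^ card T < card X"
  shows "\<exists>x\<in>X. \<exists>y\<in>X. x \<noteq> y \<and> (\<forall>t\<in>T. f x t = f y t)"
proof (rule ccontr)
  assume "\<not> ?thesis"
  then have "inj_on (\<lambda>x. restrict (f x) T) X"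
    by (auto simp: inj_on_def fun_eq_iff)
  then have "card X \<le> card (T \<rightarrow>\<^sub>E (UNIV :: 'a set))"
    by (rule card_inj_on_le) (auto simp: assms(1) finite_PiE)
  then show False using assms by (simp add: card_funcsetE)
qed

subsection \<open>Words and Hamming distance\<close>

lemma bij_betw_words_PiE:
  "bij_betw (\<lambda>w. restrict w {..<n}) (words n :: (nat \<Rightarrow> 'a::zero) set) ({..<n} \<rightarrow>\<^sub>E UNIV)"
proof (rule bij_betw_byWitness[where f' = "\<lambda>u i. if i < n then u i else 0"])
  show "\<forall>w\<in>words n. (\<lambda>i. if i < n then restrict w {..<n} i else 0) = w"
    unfolding words_def by (auto intro!: ext)
  show "\<forall>u \<in> {..<n} \<rightarrow>\<^sub>E UNIV.
      restrict (\<lambda>i. if i < n then u i else 0) {..<n} = (u :: nat \<Rightarrow> 'a)"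
  proof
    fix u :: "nat \<Rightarrow> 'a" assume "u \<in> {..<n} \<rightarrow>\<^sub>E UNIV"
    moreover have "restrict (\<lambda>i. if i < n then u i else 0) {..<n} = restrict u {..<n}"
      by (intro restrict_ext) simp
    ultimately show "restrict (\<lambda>i. if i < n then u i else 0) {..<n} = u"
      by (simp add: PiE_restrict)
  qed
  show "(\<lambda>w. restrict w {..<n}) ` words n \<subseteq> {..<n} \<rightarrow>\<^sub>E UNIV"
    by (simp add: image_subset_iff)
  show "(\<lambda>u i. if i < n then u i else 0) ` ({..<n} \<rightarrow>\<^sub>E UNIV) \<subseteq> words n"
    by (simp add: words_def image_subset_iff)
qed

lemma finite_words: "finite (words n :: (nat \<Rightarrow> 'a::{finite,zero}) set)"
  unfolding bij_betw_finite[OF bij_betw_words_PiE] by (intro finite_PiE) auto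

lemma card_words: "card (words n :: (nat \<Rightarrow> 'a::{finite,zero}) set) = card (UNIV :: 'a set) ^ n"
  using bij_betw_same_card[OF bij_betw_words_PiE[of n]] by (simp add: card_funcsetE)

lemma words_differ_below:
  assumes "x \<in> words n" "y \<in> words n" "x i \<noteq> y i"
  shows "i < n"
proof (rule ccontr)
  assume "\<not> i < n"
  then show False using assms by (simp add: words_def)
qed

lemma words_nonzero_below: "w \<in> words n \<Longrightarrow> w i \<noteq> 0 \<Longrightarrow> i < n"
  using words_differ_below[of w n 0] by (simp add: words_def)

lemma hdist_le_length:
  assumes "x \<in> words n" "y \<in> words n"
  shows "hdist x y \<le> n"
proof -
  have "{i. x i \<noteq> y i} \<subseteq> {..<n}"
    using assms words_differ_below by blast
  then show ?thesis unfolding hdist_def using card_mono[of "{..<n}"] by fastforce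
qed

lemma hdist_zero_le:
  assumes "c \<in> words n" "\<forall>i<m. c i = 0"
  shows "hdist c 0 \<le> n - m"
proof -
  have "{i. c i \<noteq> 0} \<subseteq> {m..<n}"
    using assms words_nonzero_below by (auto simp: not_less[symmetric])
  then have "card {i. c i \<noteq> 0} \<le> card {m..<n}" by (intro card_mono) auto
  then show ?thesis unfolding hdist_def by simp
qed

lemma hdist_pos:
  assumes "x \<in> words n" "y \<in> words n" "x \<noteq> y"
  shows "0 < hdist x y"
proof -
  have "{i. x i \<noteq> y i} \<subseteq> {..<n}"
    using assms words_differ_below by blast
  moreover have "{i. x i \<noteq> y i} \<noteq> {}" using assms(3) by (auto simp: fun_eq_iff)
  ultimately show ?thesis unfolding hdist_def by (simp add: card_gt_0_iff finite_subset)
qed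

lemma finite_hdist_set:
  assumes "C \<subseteq> words n"
  shows "finite {hdist x y | x y. x \<in> C \<and> y \<in> C \<and> x \<noteq> y}"
  by (rule finite_subset[of _ "{..n}"]) (use assms hdist_le_length in blast)+

lemma min_dist_le:
  assumes "C \<subseteq> words n" "x \<in> C" "y \<in> C" "x \<noteq> y"
  shows "min_dist C \<le> hdist x y"
  unfolding min_dist_def using assms finite_hdist_set by (intro Min_le) auto

lemma min_dist_pos:
  assumes "C \<subseteq> words n" "x \<in> C" "y \<in> C" "x \<noteq> y"
  shows "0 < min_dist C"
  unfolding min_dist_def using assms finite_hdist_set[OF assms(1)] hdist_pos
  by (subst Min_gr_iff) blast+

subsection \<open>Linear codes\<close>

lemma linear_code_finite:
  fixes C :: "(nat \<Rightarrow> 'a::{finite,field}) set"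
  assumes "linear_code n k d C"
  shows "finite C"
  using assms finite_words finite_subset unfolding linear_code_def by blast

lemma card_subspace_ge:
  fixes C :: "(nat \<Rightarrow> 'a::{finite,field}) set"
  assumes "VS.subspace C" "finite C"
  shows "card (UNIV :: 'a set) ^ VS.dim C \<le> card C"
proof -
  obtain Bs where Bs: "Bs \<subseteq> C" "VS.independent Bs" "card Bs = VS.dim C"
    by (rule VS.basis_exists[of C])
  have fin: "finite Bs" using Bs(1) assms(2) finite_subset by blast
  define comb where "comb u = (\<Sum>v\<in>Bs. svec (u v) v)" for u :: "(nat \<Rightarrow> 'a) \<Rightarrow> 'a"
  have "comb u \<in> C" for u
    unfolding comb_def using Bs(1)
    by (intro VS.subspace_sum[OF assms(1)] VS.subspace_scale[OF assms(1)]) blast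
  then have "comb ` (Bs \<rightarrow>\<^sub>E UNIV) \<subseteq> C" by blast
  moreover have "inj_on comb (Bs \<rightarrow>\<^sub>E UNIV)"
  proof (rule inj_onI)
    fix u u' assume u: "u \<in> Bs \<rightarrow>\<^sub>E UNIV" and u': "u' \<in> Bs \<rightarrow>\<^sub>E UNIV" and "comb u = comb u'"
    then have "(\<Sum>v\<in>Bs. svec (u v - u' v) v) = 0"
      unfolding comb_def by (simp add: VS.scale_left_diff_distrib sum_subtractf)
    then have "\<forall>v\<in>Bs. u v = u' v"
      using VS.independentD[OF Bs(2) fin order_refl, of "\<lambda>v. u v - u' v"] by simp
    then show "u = u'" using PiE_ext[OF u u'] by blast
  qed
  ultimately have "card (Bs \<rightarrow>\<^sub>E (UNIV :: 'a set)) \<le> card C"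
    using card_inj_on_le assms(2) by blast
  then show ?thesis using Bs(3) fin by (simp add: card_funcsetE)
qed

lemma card_linear_code_ge:
  fixes C :: "(nat \<Rightarrow> 'a::{finite,field}) set"
  assumes "linear_code n k d C"
  shows "card (UNIV :: 'a set) ^ k \<le> card C"
  using assms card_subspace_ge linear_code_finite unfolding linear_code_def by blast

lemma linear_code_eq_0_if_vanishes_prefix:
  assumes C: "linear_code n k d C" and "c \<in> C" and vanish: "\<forall>i < n + 1 - d. c i = 0"
  shows "c = 0"
proof (rule ccontr)
  assume "c \<noteq> 0"
  have C_words: "C \<subseteq> words n" and "0 \<in> C" and "min_dist C = d"
    using C VS.subspace_0 unfolding linear_code_def by auto
  then have "d \<le> hdist c 0" using min_dist_le \<open>c \<in> C\<close> \<open>c \<noteq> 0\<close> by metis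
  moreover have "hdist c 0 \<le> n - (n + 1 - d)"
    using hdist_zero_le C_words \<open>c \<in> C\<close> vanish by blast
  moreover have "0 < hdist c 0"
    using hdist_pos C_words \<open>c \<in> C\<close> \<open>0 \<in> C\<close> \<open>c \<noteq> 0\<close> by blast
  ultimately show False by arith
qed

lemma singleton_bound:
  fixes C :: "(nat \<Rightarrow> 'a::{finite,field}) set"
  assumes C: "linear_code n k d C"
  shows "k \<le> n + 1 - d"
proof (rule ccontr)
  let ?s = "n + 1 - d"
  assume "\<not> k \<le> ?s"
  then have "card (UNIV :: 'a set) ^ card {..<?s} < card (UNIV :: 'a set) ^ k"
    using two_le_card_field[where 'a='a] by (intro power_strict_increasing) auto
  also have "\<dots> \<le> card C" using card_linear_code_ge[OF C] .
  finally obtain x y where "x \<in> C" "y \<in> C" "x \<noteq> y" "\<forall>i\<in>{..<?s}. x i = y i"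
    using pigeonhole_agree_on[where f = "\<lambda>x. x"] by blast
  moreover have "VS.subspace C" using C unfolding linear_code_def by blast
  ultimately have "x - y = 0"
    by (intro linear_code_eq_0_if_vanishes_prefix[OF C]) (auto intro: VS.subspace_diff)
  with \<open>x \<noteq> y\<close> show False by simp
qed

lemma linear_code_min_dist_pos:
  fixes C :: "(nat \<Rightarrow> 'a::{finite,field}) set"
  assumes C: "linear_code n k d C" and "0 < k"
  shows "0 < d"
proof -
  have "1 < card (UNIV :: 'a set) ^ k"
    using two_le_card_field[where 'a='a] \<open>0 < k\<close> by (intro one_less_power) auto
  then have "card {0 :: nat \<Rightarrow> 'a} < card (UNIV :: 'a set) ^ k" by simp
  also have "\<dots> \<le> card C" using card_linear_code_ge[OF C] .
  finally have "\<not> C \<subseteq> {0}"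
    using card_mono[of "{0}" C] by fastforce
  then obtain c where "c \<in> C" "c \<noteq> 0" by blast
  moreover have "C \<subseteq> words n" "0 \<in> C" "min_dist C = d"
    using C VS.subspace_0 unfolding linear_code_def by auto
  ultimately show ?thesis using min_dist_pos by metis
qed

lemma linear_code_exists_nonzero_vanishing_on:
  fixes B :: "(nat \<Rightarrow> 'b::{finite,field}) set" and g :: "'b \<Rightarrow> 'i \<Rightarrow> 'a::{finite,field}"
  assumes B: "linear_code n k d B"
    and g_diff: "\<And>x y. g (x - y) = g x - g y"
    and card_b: "card (UNIV :: 'b set) = card (UNIV :: 'a set) ^ m"
    and P: "finite P" "card P < m * k"
  shows "\<exists>b\<in>B. b \<noteq> 0 \<and> (\<forall>(j, i)\<in>P. g (b j) i = 0)"
proof -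
  have "card (UNIV :: 'a set) ^ card P < card (UNIV :: 'a set) ^ (m * k)"
    using two_le_card_field[where 'a='a] P(2) by (intro power_strict_increasing) auto
  also have "\<dots> = card (UNIV :: 'b set) ^ k" by (simp add: card_b power_mult)
  also have "\<dots> \<le> card B" using card_linear_code_ge[OF B] .
  finally obtain b1 b2 where "b1 \<in> B" "b2 \<in> B" "b1 \<noteq> b2"
    and agree: "\<forall>(j, i)\<in>P. g (b1 j) i = g (b2 j) i"
    using pigeonhole_agree_on[OF P(1), where X = B and f = "\<lambda>b (j, i). g (b j) i"] by fast
  have "b1 - b2 \<in> B"
    using B VS.subspace_diff \<open>b1 \<in> B\<close> \<open>b2 \<in> B\<close> unfolding linear_code_def by blast
  moreover have "\<forall>(j, i)\<in>P. g ((b1 - b2) j) i = 0"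
    using agree by (auto simp: g_diff)
  ultimately show ?thesis using \<open>b1 \<noteq> b2\<close> by force
qed

subsection \<open>Concatenated codes\<close>

definition concat_word ::
  "nat \<Rightarrow> nat \<Rightarrow> ((nat \<Rightarrow> 'a::zero) \<Rightarrow> (nat \<Rightarrow> 'a)) \<Rightarrow> ('b \<Rightarrow> (nat \<Rightarrow> 'a))
    \<Rightarrow> (nat \<Rightarrow> 'b) \<Rightarrow> nat \<Rightarrow> 'a"
  where "concat_word n1 n2 enc phi b =
    (\<lambda>t. if t < n1 * n2 then enc (phi (b (t div n1))) (t mod n1) else 0)"

lemma concat_code_eq_image: "concat_code n1 n2 enc phi B = concat_word n1 n2 enc phi ` B"
  unfolding concat_code_def concat_word_def ..

lemma concat_word_in_words: "concat_word n1 n2 enc phi b \<in> words (n1 * n2)"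
  by (simp add: concat_word_def words_def)

lemma concat_word_block:
  assumes "j < n2" "i < n1"
  shows "concat_word n1 n2 enc phi b (j * n1 + i) = enc (phi (b j)) i"
proof -
  have "j * n1 + i < (j + 1) * n1" using assms(2) by simp
  also have "\<dots> \<le> n2 * n1" using assms(1) by (intro mult_le_mono1) simp
  finally show ?thesis using assms(2) by (simp add: concat_word_def mult.commute)
qed

lemma concat_word_0: "enc (phi 0) = 0 \<Longrightarrow> concat_word n1 n2 enc phi 0 = 0"
  by (simp add: concat_word_def fun_eq_iff)

lemma concat_word_nonzero:
  assumes "b \<in> words n2" "b \<noteq> 0"
    and "\<And>x. enc (phi x) \<in> words n1" "\<And>x. enc (phi x) = 0 \<Longrightarrow> x = 0"
  shows "concat_word n1 n2 enc phi b \<noteq> 0"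
proof -
  obtain j where "b j \<noteq> 0" using assms(2) by (auto simp: fun_eq_iff)
  then have "j < n2" using assms(1) words_nonzero_below by blast
  obtain i where i: "enc (phi (b j)) i \<noteq> 0" using assms(4) \<open>b j \<noteq> 0\<close> by (auto simp: fun_eq_iff)
  then have "i < n1" using assms(3) words_nonzero_below by blast
  then have "concat_word n1 n2 enc phi b (j * n1 + i) \<noteq> 0"
    using concat_word_block[OF \<open>j < n2\<close> \<open>i < n1\<close>, of enc phi b] i by simp
  then show ?thesis by auto
qed

lemma concat_word_vanishes_below:
  assumes "\<And>j. j < p \<Longrightarrow> enc (phi (b j)) = 0" "\<And>i. i < r \<Longrightarrow> enc (phi (b p)) i = 0"
    and "r \<le> n1" "t < p * n1 + r"
  shows "concat_word n1 n2 enc phi b t = 0"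
proof (cases "t < p * n1")
  case True
  then have "t div n1 < p" by (simp add: less_mult_imp_div_less)
  then show ?thesis using assms(1) by (simp add: concat_word_def)
next
  case False
  then obtain i where "t = p * n1 + i" and "i < r"
    using assms(4) by (metis add_less_cancel_left le_Suc_ex not_less)
  then have "t div n1 = p" "t mod n1 = i" using assms(3) by auto
  then show ?thesis using assms(2) \<open>i < r\<close> by (simp add: concat_word_def)
qed

lemma concat_code_nonzero_word_vanishing_below:
  fixes A :: "(nat \<Rightarrow> 'a::{finite,field}) set" and B :: "(nat \<Rightarrow> 'b::{finite,field}) set"
  assumes inner: "linear_code n1 k1 d1 A" "0 < d1"
    and outer: "linear_code n2 k2 d2 B"
    and phi_diff: "\<And>x y. phi (x - y) = phi x - phi y" and phi_bij: "bij_betw phi UNIV (words k1)"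
    and enc_diff: "\<And>u v. enc (u - v) = enc u - enc v" and enc_bij: "bij_betw enc (words k1) A"
    and size: "p * (n1 + 1 - d1) + r < k1 * k2" "r < n1 + 1 - d1"
  shows "\<exists>c\<in>concat_code n1 n2 enc phi B. c \<noteq> 0 \<and> (\<forall>t < p * n1 + r. c t = 0)"
proof -
  define s where "s = n1 + 1 - d1"
  have encode_in_A: "enc (phi x) \<in> A" for x
    using bij_betwE[OF phi_bij] bij_betwE[OF enc_bij] by blast
  have encode_eq_0: "x = 0" if "enc (phi x) = 0" for x
  proof -
    have "phi 0 = 0" "enc 0 = 0" using phi_diff[of 0 0] enc_diff[of 0 0] by simp_all
    moreover have "inj phi" "inj_on enc (words k1)" "phi x \<in> words k1" "phi 0 \<in> words k1"
      using phi_bij enc_bij by (auto simp: bij_betw_def)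
    ultimately show ?thesis using that by (metis inj_on_eq_iff injD)
  qed
  define P where "P = {..<p} \<times> {..<s} \<union> {p} \<times> {..<r}"
  have "card P \<le> p * s + r"
    unfolding P_def using card_Un_le[of "{..<p} \<times> {..<s}" "{p} \<times> {..<r}"]
    by (simp add: card_cartesian_product)
  moreover have "card (UNIV :: 'b set) = card (UNIV :: 'a set) ^ k1"
    using bij_betw_same_card[OF phi_bij] card_words by metis
  moreover have "enc (phi (x - y)) = enc (phi x) - enc (phi y)" for x y
    by (simp add: phi_diff enc_diff)
  ultimately obtain b where "b \<in> B" "b \<noteq> 0" and vanish: "\<forall>(j, i)\<in>P. enc (phi (b j)) i = 0"
    using linear_code_exists_nonzero_vanishing_on[OF outer, of "\<lambda>x. enc (phi x)" k1 P] size(1)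
    by (force simp: P_def s_def)
  have "enc (phi (b j)) = 0" if "j < p" for j
    using linear_code_eq_0_if_vanishes_prefix[OF inner(1) encode_in_A] vanish that
    by (auto simp: P_def s_def)
  moreover have "enc (phi (b p)) i = 0" if "i < r" for i
    using vanish that by (auto simp: P_def)
  moreover have "r \<le> n1" using size(2) \<open>0 < d1\<close> by simp
  ultimately have "\<forall>t < p * n1 + r. concat_word n1 n2 enc phi b t = 0"
    using concat_word_vanishes_below by blast
  moreover have "concat_word n1 n2 enc phi b \<noteq> 0"
    using \<open>b \<in> B\<close> \<open>b \<noteq> 0\<close> outer encode_in_A inner(1) encode_eq_0
    by (intro concat_word_nonzero) (auto simp: linear_code_def)
  ultimately show ?thesis using \<open>b \<in> B\<close> by (auto simp: concat_code_eq_image)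
qed

lemma min_dist_concat_code_le:
  fixes A :: "(nat \<Rightarrow> 'a::{finite,field}) set" and B :: "(nat \<Rightarrow> 'b::{finite,field}) set"
  assumes inner: "linear_code n1 k1 d1 A" "0 < k1"
    and outer: "linear_code n2 k2 d2 B" "0 < k2"
    and phi_diff: "\<And>x y. phi (x - y) = phi x - phi y" and phi_bij: "bij_betw phi UNIV (words k1)"
    and enc_diff: "\<And>u v. enc (u - v) = enc u - enc v" and enc_bij: "bij_betw enc (words k1) A"
  defines "s \<equiv> n1 + 1 - d1"
  defines "p \<equiv> (k1 * k2 - 1) div s" and "r \<equiv> (k1 * k2 - 1) mod s"
  shows "min_dist (concat_code n1 n2 enc phi B) \<le> n1 * n2 - (p * n1 + r)"
    and "p * n1 + r \<le> n1 * n2"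
proof -
  have "0 < d1" "0 < d2" using linear_code_min_dist_pos inner outer by auto
  have "k1 \<le> s" "k2 \<le> n2"
    using singleton_bound[OF inner(1)] singleton_bound[OF outer(1)] \<open>0 < d2\<close> by (auto simp: s_def)
  then have "0 < s" using inner(2) by simp
  then have k: "p * s + r + 1 = k1 * k2" "r < s" using inner(2) outer(2) by (simp_all add: p_def r_def)
  have "p * s < s * k2" using k mult_le_mono1[OF \<open>k1 \<le> s\<close>, of k2] by linarith
  then have "p < n2" using \<open>k2 \<le> n2\<close> by (simp add: mult.commute)
  have "p * n1 + r \<le> (p + 1) * n1" using k(2) \<open>0 < d1\<close> by (simp add: s_def)
  also have "\<dots> \<le> n2 * n1" using \<open>p < n2\<close> by (intro mult_le_mono1) simp
  finally show "p * n1 + r \<le> n1 * n2" by (simp add: mult.commute)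
  have "p * (n1 + 1 - d1) + r < k1 * k2" "r < n1 + 1 - d1" using k by (simp_all add: s_def)
  then obtain c where c: "c \<in> concat_code n1 n2 enc phi B" "c \<noteq> 0" "\<forall>t < p * n1 + r. c t = 0"
    using concat_code_nonzero_word_vanishing_below[OF inner(1) \<open>0 < d1\<close> outer(1)
        phi_diff phi_bij enc_diff enc_bij] by blast
  have C_words: "concat_code n1 n2 enc phi B \<subseteq> words (n1 * n2)"
    by (auto simp: concat_code_eq_image concat_word_in_words)
  have "0 \<in> B" using outer(1) VS.subspace_0 unfolding linear_code_def by blast
  moreover have "enc (phi 0) = 0" using phi_diff[of 0 0] enc_diff[of 0 0] by simp
  ultimately have "0 \<in> concat_code n1 n2 enc phi B"
    using concat_word_0 by (metis concat_code_eq_image image_eqI)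
  then have "min_dist (concat_code n1 n2 enc phi B) \<le> hdist c 0"
    using min_dist_le[OF C_words] c by blast
  also have "\<dots> \<le> n1 * n2 - (p * n1 + r)"
    using hdist_zero_le C_words c by blast
  finally show "min_dist (concat_code n1 n2 enc phi B) \<le> n1 * n2 - (p * n1 + r)" .
qed

lemma ceiling_divide_eq_div_pred:
  fixes k s :: nat
  assumes "0 < k" "0 < s"
  shows "\<lceil>real k / real s\<rceil> = int ((k - 1) div s) + 1"
proof (rule ceiling_unique)
  let ?q = "(k - 1) div s"
  have k: "k = ?q * s + (k - 1) mod s + 1" using assms(1) by simp
  then have "?q * s < k" by linarith
  then have "real ?q * real s < real k" by (simp flip: of_nat_mult)
  then show "real_of_int (int ?q + 1) - 1 < real k / real s"
    using assms(2) by (simp add: pos_less_divide_eq)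
  have "(k - 1) mod s < s" using assms(2) by simp
  then have "k \<le> (?q + 1) * s" using k add_mult_distrib[of ?q 1 s] by linarith
  then have "real k \<le> real ((?q + 1) * s)" by (simp only: of_nat_le_iff)
  then show "real k / real s \<le> real_of_int (int ?q + 1)"
    using assms(2) by (simp add: pos_divide_le_eq algebra_simps)
qed

lemma diff_div_mod_eq_ceiling_bound:
  fixes m n d k :: nat
  assumes "0 < d" "d \<le> n" "0 < k"
  defines "p \<equiv> (k - 1) div (n + 1 - d)" and "r \<equiv> (k - 1) mod (n + 1 - d)"
  assumes "p * n + r \<le> m"
  shows "int (m - (p * n + r)) = int m - int k + 1 - (\<lceil>real k / (real n - real d + 1)\<rceil> - 1) * (int d - 1)"
proof -
  define s where "s = n + 1 - d"
  have "0 < s" "int n = int s + int d - 1" using assms(2) by (simp_all add: s_def of_nat_diff)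
  then have "int p * int n = int p * int s + int p * int d - int p"
    by (simp add: right_diff_distrib distrib_left)
  moreover have "int p * int s + int r + 1 = int k"
    using \<open>0 < k\<close> arg_cong[OF div_mult_mod_eq[of "k - 1" s], of int]
    by (simp add: p_def r_def s_def)
  moreover have "real n - real d + 1 = real s" using assms(2) by (simp add: s_def of_nat_diff)
  then have "\<lceil>real k / (real n - real d + 1)\<rceil> = int p + 1"
    using ceiling_divide_eq_div_pred[OF \<open>0 < k\<close> \<open>0 < s\<close>] by (simp add: p_def s_def)
  ultimately show ?thesis using \<open>p * n + r \<le> m\<close> by (simp add: of_nat_diff algebra_simps)
qed

theorem mainTheorem9:
  fixes A :: "(nat \<Rightarrow> 'a::{finite,field}) set"
    and B :: "(nat \<Rightarrow> 'b::{finite,field}) set"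
    and emb :: "'a \<Rightarrow> 'b"
    and phi :: "'b \<Rightarrow> (nat \<Rightarrow> 'a)"
    and enc :: "(nat \<Rightarrow> 'a) \<Rightarrow> (nat \<Rightarrow> 'a)"
    and n1 k1 d1 n2 k2 d2 :: nat
  assumes inner: "linear_code n1 k1 d1 A" and k1_pos: "k1 \<ge> 1"
    and emb: "field_embedding emb"
    and phi_lin: "Vector_Spaces.linear (\<lambda>c x. emb c * x) svec phi"
    and phi_bij: "bij_betw phi UNIV (words k1)"
    and outer: "linear_code n2 k2 d2 B" and k2_pos: "k2 \<ge> 1"
    and enc_lin: "Vector_Spaces.linear svec svec enc"
    and enc_bij: "bij_betw enc (words k1) A"
  shows "int (min_dist (concat_code n1 n2 enc phi B))
           \<le> int (n1 * n2) - int (k1 * k2) + 1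
              - (\<lceil>real (k1 * k2) / (real n1 - real d1 + 1)\<rceil> - 1) * (int d1 - 1)"
proof -
  have phi_diff: "phi (x - y) = phi x - phi y" for x y
    using phi_lin module_hom.diff unfolding Vector_Spaces.linear_def by blast
  have enc_diff: "enc (u - v) = enc u - enc v" for u v
    using enc_lin module_hom.diff unfolding Vector_Spaces.linear_def by blast
  let ?p = "(k1 * k2 - 1) div (n1 + 1 - d1)" and ?r = "(k1 * k2 - 1) mod (n1 + 1 - d1)"
  have "0 < d1" using linear_code_min_dist_pos[OF inner] k1_pos by simp
  have "d1 \<le> n1" using singleton_bound[OF inner] k1_pos by simp
  have "0 < k1 * k2" using k1_pos k2_pos by simp
  have "min_dist (concat_code n1 n2 enc phi B) \<le> n1 * n2 - (?p * n1 + ?r)"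
    and fits: "?p * n1 + ?r \<le> n1 * n2"
    using min_dist_concat_code_le[OF inner _ outer _ phi_diff phi_bij enc_diff enc_bij] k1_pos k2_pos
    by auto
  then have "int (min_dist (concat_code n1 n2 enc phi B)) \<le> int (n1 * n2 - (?p * n1 + ?r))"
    by (simp only: of_nat_le_iff)
  also have "\<dots> = int (n1 * n2) - int (k1 * k2) + 1
      - (\<lceil>real (k1 * k2) / (real n1 - real d1 + 1)\<rceil> - 1) * (int d1 - 1)"
    by (rule diff_div_mod_eq_ceiling_bound[OF \<open>0 < d1\<close> \<open>d1 \<le> n1\<close> \<open>0 < k1 * k2\<close> fits])
  finally show ?thesis .
qed

end
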